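(* Let $\lambda:[0,\infty)\to(0,\infty)$ be continuous, $n\ge2$, $\rho>0$, and let $\bar A^\rho(t)=(\bar K_{ab}(t),\bar K_a(t),\bar K_b(t),\bar R(t))$ be the ancestral process with limited recombination. Define $L^a(t)=\int_0^t\mathbb 1_{\{\bar K_{ab}(s)+\bar K_a(s)>1\}}(\bar K_{ab}(s)+\bar K_a(s))\,ds$, $L^b(t)=\int_0^t\mathbb 1_{\{\bar K_{ab}(s)+\bar K_b(s)>1\}}(\bar K_{ab}(s)+\bar K_b(s))\,ds$, $T^a=\inf\{t: \bar K_{ab}(t)+\bar K_a(t)\le1\}$, $T^b=\inf\{t:\bar K_{ab}(t)+\bar K_b(t)\le1\}$, $\mathcal L^a=L^a(T^a)$, $\mathcal L^b=L^b(T^b)$, and $F_s(t,x,y)=\mathbb P\{\bar A^\rho(t)=s,\,L^a(t)\le x,\,L^b(t)\le y\}$. Let $\Delta=\{(1,0,0,0),(1,0,0,1)\}$. Then for all $x,y\in[0,\infty)$ and all $\bar t\ge\max\{x,y\}/2$, \[ \mathbb P\{\mathcal L^a\le x,\,\mathcal L^b\le y\}=\mathbb P\{\bar A^\rho(\bar t)\in\Delta,\,L^a(\bar t)\le x,\,L^b(\bar t)\le y\}=F_{(1,0,0,0)}(\bar t,x,y)+F_{(1,0,0,1)}(\bar t,x,y). \]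
   Context: The ancestral process with limited recombination is the time-inhomogeneous Markov chain $\bar A^\rho(t)$ with initial state $(n,0,0,0)$ on the state space $\bar{\mathcal S}^\rho=\big(\{1,\dots,n\}\times\{(0,0,0)\}\cup\{1,\dots,n\}\times\{0,1\}\times\{0,1\}\times\{1\}\big)\setminus\{(n,1,1,1),(n,1,0,1),(n,0,1,1)\}$. A state $(k_{ab},k_a,k_b,r)$ records the numbers of lineages ancestral to both loci $a,b$, to locus $a$ only, to locus $b$ only, and the number $r\in\{0,1\}$ of recombination events so far. Its generator is $\bar Q(t)=\lambda(t)\bar Q^c+\bar Q^\rho$: coalescence transitions (rates multiplied by $\lambda(t)$, $r$ unchanged) are $(k_{ab},k_a,k_b,r)\to(k_{ab}-1,k_a,k_b,r)$ at rate $\binom{k_{ab}}2$, $\to(k_{ab},k_a-1,k_b,r)$ at rate $\binom{k_a}2+k_{ab}k_a$, $\to(k_{ab},k_a,k_b-1,r)$ at rate $\binom{k_b}2+k_{ab}k_b$, and $\to(k_{ab}+1,k_a-1,k_b-1,r)$ at rate $k_ak_b$; the only recombination transition is $(k_{ab},k_a,k_b,0)\to(k_{ab}-1,k_a+1,k_b+1,1)$ at rate $\frac{\rho}{2}k_{ab}$ (not multiplied by $\lambda$). The states $(1,0,0,0)$ and $(1,0,0,1)$ are absorbing, and diagonal entries are minus the sum of off-diagonal entries of the row. *)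

theory Defs
  imports "HOL-Probability.Probability"
begin

type_synonym st = "nat \<times> nat \<times> nat \<times> nat"
  (* (k_ab, k_a, k_b, r) *)

definition state_space :: "nat \<Rightarrow> st set" where
  "state_space n =
     ({1..n} \<times> {(0,0,0)} \<union> {1..n} \<times> {0,1} \<times> {0,1} \<times> {1})
     - {(n,1,1,1),(n,1,0,1),(n,0,1,1)}"

definition Delta :: "st set" where
  "Delta = {(1,0,0,0),(1,0,0,1)}"

definition coal_rate :: "st \<Rightarrow> st \<Rightarrow> real" where
  "coal_rate s s' = (case s of (kab,ka,kb,r) \<Rightarrow>
      (if s' = (kab - 1, ka, kb, r) then real (kab choose 2) else 0)
    + (if s' = (kab, ka - 1, kb, r) then real (ka choose 2) + real kab * real ka else 0)
    + (if s' = (kab, ka, kb - 1, r) then real (kb choose 2) + real kab * real kb else 0)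
    + (if s' = (kab + 1, ka - 1, kb - 1, r) then real ka * real kb else 0))"

definition rec_rate :: "real \<Rightarrow> st \<Rightarrow> st \<Rightarrow> real" where
  "rec_rate \<rho> s s' = (case s of (kab,ka,kb,r) \<Rightarrow>
      (if r = 0 \<and> s' = (kab - 1, ka + 1, kb + 1, 1) then \<rho> / 2 * real kab else 0))"

definition offdiag_rate :: "(real \<Rightarrow> real) \<Rightarrow> real \<Rightarrow> real \<Rightarrow> st \<Rightarrow> st \<Rightarrow> real" where
  "offdiag_rate lam \<rho> t s s' =
     (if s \<in> Delta then 0 else lam t * coal_rate s s' + rec_rate \<rho> s s')"

text \<open>The generator Q(t) = lambda(t) Q^c + Q^rho on the state space.\<close>
definition gen :: "(real \<Rightarrow> real) \<Rightarrow> real \<Rightarrow> nat \<Rightarrow> real \<Rightarrow> st \<Rightarrow> st \<Rightarrow> real" where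
  "gen lam \<rho> n t s s' =
     (if s' \<noteq> s then offdiag_rate lam \<rho> t s s'
      else - (\<Sum>u\<in>state_space n - {s}. offdiag_rate lam \<rho> t s u))"

text \<open>Transition probabilities P(s,t) solving Kolmogorov's forward equation
  d/dt P(s,t) = P(s,t) Q(t), P(s,s) = I (unique solution of a linear ODE).\<close>
definition transition_family ::
  "(real \<Rightarrow> real) \<Rightarrow> real \<Rightarrow> nat \<Rightarrow> (real \<Rightarrow> real \<Rightarrow> st \<Rightarrow> st \<Rightarrow> real) \<Rightarrow> bool" where
  "transition_family lam \<rho> n P \<longleftrightarrow>
     (\<forall>s\<ge>0. \<forall>i\<in>state_space n. \<forall>j\<in>state_space n.
        P s s i j = (if i = j then 1 else 0) \<and>
        (\<forall>t\<ge>s. ((\<lambda>u. P s u i j) has_real_derivative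
                   (\<Sum>k\<in>state_space n. P s t i k * gen lam \<rho> n t k j)) (at t within {s..})))"

text \<open>The ancestral process with limited recombination: a continuous-time
  Markov chain started at (n,0,0,0) with generator Q(t), with cadlag
  (piecewise constant) paths in the state space.\<close>
definition ancestral_process ::
  "'w measure \<Rightarrow> (real \<Rightarrow> real) \<Rightarrow> real \<Rightarrow> nat \<Rightarrow> (real \<Rightarrow> 'w \<Rightarrow> st) \<Rightarrow> bool" where
  "ancestral_process M lam \<rho> n X \<longleftrightarrow>
     (\<forall>t\<ge>0. X t \<in> measurable M (count_space UNIV)) \<and>
     (\<forall>\<omega>\<in>space M. \<forall>t\<ge>0. X t \<omega> \<in> state_space n) \<and>
     (\<forall>\<omega>\<in>space M. \<forall>t\<ge>0. \<exists>e>0. \<forall>u. t \<le> u \<and> u < t + e \<longrightarrow> X u \<omega> = X t \<omega>) \<and>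
     (\<forall>\<omega>\<in>space M. \<forall>t>0. \<exists>e>0. e \<le> t \<and> (\<forall>u v. t - e < u \<and> u < t \<and> t - e < v \<and> v < t
                                         \<longrightarrow> X u \<omega> = X v \<omega>)) \<and>
     (\<exists>P. transition_family lam \<rho> n P \<and>
        (\<forall>ts ss. length ts = length ss \<longrightarrow> ts \<noteq> [] \<longrightarrow> hd ts = 0 \<longrightarrow> sorted ts \<longrightarrow>
           set ss \<subseteq> state_space n \<longrightarrow>
           measure M {\<omega>\<in>space M. \<forall>i<length ts. X (ts ! i) \<omega> = ss ! i}
             = (if hd ss = (n,0,0,0) then 1 else 0) *
               (\<Prod>i<length ts - 1. P (ts ! i) (ts ! (i+1)) (ss ! i) (ss ! (i+1)))))"

definition kA :: "st \<Rightarrow> nat" where "kA s = fst s + fst (snd s)"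
definition kB :: "st \<Rightarrow> nat" where "kB s = fst s + fst (snd (snd s))"

definition Lfun :: "(st \<Rightarrow> nat) \<Rightarrow> (real \<Rightarrow> 'w \<Rightarrow> st) \<Rightarrow> real \<Rightarrow> 'w \<Rightarrow> real" where
  "Lfun k X t \<omega> = (LINT s:{0..t}|lborel. (if k (X s \<omega>) > 1 then real (k (X s \<omega>)) else 0))"

text \<open>T = inf{t : k(A(t)) \<le> 1} (extended real; inf of the empty set is \<infinity>).\<close>
definition hit :: "(st \<Rightarrow> nat) \<Rightarrow> (real \<Rightarrow> 'w \<Rightarrow> st) \<Rightarrow> 'w \<Rightarrow> ereal" where
  "hit k X \<omega> = Inf {ereal t | t. 0 \<le> t \<and> k (X t \<omega>) \<le> 1}"

text \<open>\<L> = L(T); if T = \<infinity> this is read as lim_{t\<rightarrow>\<infinity>} L(t).\<close>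
definition Ltot :: "(st \<Rightarrow> nat) \<Rightarrow> (real \<Rightarrow> 'w \<Rightarrow> st) \<Rightarrow> 'w \<Rightarrow> ereal" where
  "Ltot k X \<omega> = (if hit k X \<omega> = \<infinity> then (SUP t\<in>{0..}. ereal (Lfun k X t \<omega>))
                  else ereal (Lfun k X (real_of_ereal (hit k X \<omega>)) \<omega>))"

definition Fs :: "'w measure \<Rightarrow> (real \<Rightarrow> 'w \<Rightarrow> st) \<Rightarrow> st \<Rightarrow> real \<Rightarrow> real \<Rightarrow> real \<Rightarrow> real" where
  "Fs M X s t x y = measure M {\<omega>\<in>space M. X t \<omega> = s \<and> Lfun kA X t \<omega> \<le> x \<and> Lfun kB X t \<omega> \<le> y}"

end

theory Submission
  imports Defs
begin

text \<open>Once a locus has found its most recent common ancestor (\<open>k \<le> 1\<close>), the chain never leaves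
  \<open>{k \<le> 1}\<close>: by the forward equation a class of states without outgoing rates keeps its
  probability mass, and right-continuity of the paths turns this into a statement about almost
  every path. Before the hitting time \<open>T\<close> at least two lineages remain, so the integrand of
  \<open>L\<close> is at least \<open>2\<close> and \<open>L(T) \<le> z\<close> forces \<open>T \<le> z/2\<close>; after \<open>T\<close> the integrand vanishes.
  Hence for \<open>t \<ge> z/2\<close>, almost surely \<open>L(T) \<le> z\<close> iff \<open>k(A(t)) \<le> 1\<close> and \<open>L(t) \<le> z\<close>. For both
  loci at once, \<open>k\<^sub>a\<^sub>b + k\<^sub>a \<le> 1\<close> and \<open>k\<^sub>a\<^sub>b + k\<^sub>b \<le> 1\<close> single out \<open>\<Delta>\<close>.\<close>

section \<open>The generator and the forward equation\<close>

lemma finite_state_space: "finite (state_space n)"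
  unfolding state_space_def by auto

lemma offdiag_rate_nonneg: "0 \<le> lam t \<Longrightarrow> 0 \<le> \<rho> \<Longrightarrow> 0 \<le> offdiag_rate lam \<rho> t s s'"
  unfolding offdiag_rate_def coal_rate_def rec_rate_def by (simp split: prod.split)

lemma gen_row_sum_eq_0:
  assumes "s \<in> state_space n"
  shows "(\<Sum>s'\<in>state_space n. gen lam \<rho> n t s s') = 0"
proof -
  have "(\<Sum>s'\<in>state_space n. gen lam \<rho> n t s s')
      = gen lam \<rho> n t s s + (\<Sum>s'\<in>state_space n - {s}. offdiag_rate lam \<rho> t s s')"
    using assms finite_state_space by (simp add: sum.remove gen_def)
  then show ?thesis by (simp add: gen_def)
qed

definition closed_class :: "(real \<Rightarrow> real) \<Rightarrow> real \<Rightarrow> nat \<Rightarrow> st set \<Rightarrow> bool" where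
  "closed_class lam \<rho> n C \<longleftrightarrow> C \<subseteq> state_space n \<and>
     (\<forall>t s s'. s \<in> C \<longrightarrow> s' \<in> state_space n - C \<longrightarrow> offdiag_rate lam \<rho> t s s' = 0)"

lemma gen_sum_closed_class_eq_0:
  assumes C: "closed_class lam \<rho> n C" and s: "s \<in> C"
  shows "(\<Sum>s'\<in>C. gen lam \<rho> n t s s') = 0"
proof -
  have CS: "C \<subseteq> state_space n" using C by (simp add: closed_class_def)
  then have fC: "finite C" using finite_state_space finite_subset by blast
  have "(\<Sum>s'\<in>state_space n - {s}. offdiag_rate lam \<rho> t s s')
     = (\<Sum>s'\<in>state_space n - C. offdiag_rate lam \<rho> t s s') + (\<Sum>s'\<in>C - {s}. offdiag_rate lam \<rho> t s s')"
    using CS s finite_state_space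
    by (subst sum.subset_diff[of "C - {s}"]) (auto intro!: sum.cong)
  also have "(\<Sum>s'\<in>state_space n - C. offdiag_rate lam \<rho> t s s') = 0"
    using C s unfolding closed_class_def by (intro sum.neutral ballI) blast
  finally have diag: "gen lam \<rho> n t s s = - (\<Sum>s'\<in>C - {s}. offdiag_rate lam \<rho> t s s')"
    by (simp add: gen_def)
  have "(\<Sum>s'\<in>C. gen lam \<rho> n t s s') = gen lam \<rho> n t s s + (\<Sum>s'\<in>C - {s}. gen lam \<rho> n t s s')"
    using fC s by (simp add: sum.remove)
  also have "(\<Sum>s'\<in>C - {s}. gen lam \<rho> n t s s') = (\<Sum>s'\<in>C - {s}. offdiag_rate lam \<rho> t s s')"
    by (rule sum.cong) (auto simp: gen_def)
  finally show ?thesis by (simp add: diag)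
qed

lemma gen_sum_nonneg_outside:
  assumes "s \<notin> C" "0 \<le> lam t" "0 \<le> \<rho>"
  shows "0 \<le> (\<Sum>s'\<in>C. gen lam \<rho> n t s s')"
proof -
  have "(\<Sum>s'\<in>C. gen lam \<rho> n t s s') = (\<Sum>s'\<in>C. offdiag_rate lam \<rho> t s s')"
    using assms by (intro sum.cong) (auto simp: gen_def)
  also have "\<dots> \<ge> 0" using offdiag_rate_nonneg assms by (intro sum_nonneg) auto
  finally show ?thesis .
qed

lemma DERIV_within_nonneg_imp_nondecreasing:
  fixes f f' :: "real \<Rightarrow> real"
  assumes f: "\<And>t. s \<le> t \<Longrightarrow> (f has_real_derivative f' t) (at t within {s..})"
    and f': "\<And>t. s \<le> t \<Longrightarrow> 0 \<le> f' t" and "s \<le> a" "a \<le> b"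
  shows "f a \<le> f b"
proof (rule DERIV_nonneg_imp_increasing_open[OF \<open>a \<le> b\<close>])
  fix x assume x: "a < x" "x < b"
  have "at x within {s..} = at x"
    by (rule at_within_interior) (use x \<open>s \<le> a\<close> in auto)
  then show "\<exists>y. (f has_real_derivative y) (at x) \<and> 0 \<le> y"
    using f[of x] f'[of x] x \<open>s \<le> a\<close> by auto
next
  have "continuous_on {s..} f"
    using f by (auto intro: DERIV_continuous simp: continuous_on_eq_continuous_within)
  then show "continuous_on {a..b} f" by (rule continuous_on_subset) (use \<open>s \<le> a\<close> in auto)
qed

lemma transition_family_row_sum:
  assumes P: "transition_family lam \<rho> n P" and "0 \<le> s" "s \<le> t" and i: "i \<in> state_space n"
  shows "(\<Sum>j\<in>state_space n. P s t i j) = 1"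
proof -
  let ?S = "state_space n"
  have deriv: "((\<lambda>u. \<Sum>j\<in>?S. P s u i j) has_real_derivative 0) (at u within {s..})" if "s \<le> u" for u
  proof -
    have "((\<lambda>u. \<Sum>j\<in>?S. P s u i j) has_real_derivative
           (\<Sum>j\<in>?S. \<Sum>k\<in>?S. P s u i k * gen lam \<rho> n u k j)) (at u within {s..})"
      using P \<open>0 \<le> s\<close> i that unfolding transition_family_def by (intro DERIV_sum) auto
    moreover have "(\<Sum>j\<in>?S. \<Sum>k\<in>?S. P s u i k * gen lam \<rho> n u k j)
                 = (\<Sum>k\<in>?S. P s u i k * (\<Sum>j\<in>?S. gen lam \<rho> n u k j))"
      by (subst sum.swap) (simp add: sum_distrib_left)
    ultimately show ?thesis by (simp add: gen_row_sum_eq_0)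
  qed
  have "\<exists>c. \<forall>u\<in>{s..}. (\<Sum>j\<in>?S. P s u i j) = c"
    by (rule has_field_derivative_zero_constant) (use deriv in auto)
  then obtain c where "\<forall>u\<in>{s..}. (\<Sum>j\<in>?S. P s u i j) = c" by blast
  then have "(\<Sum>j\<in>?S. P s t i j) = (\<Sum>j\<in>?S. P s s i j)" using \<open>s \<le> t\<close> by simp
  also have "\<dots> = 1"
    using P \<open>0 \<le> s\<close> i finite_state_space unfolding transition_family_def by (simp add: sum.delta)
  finally show ?thesis .
qed

text \<open>The derivative of the weighted mass kept in \<open>C\<close> is
  \<open>\<Sum>\<^sub>k (\<Sum>\<^sub>a p a P(s,u,a,k)) (\<Sum>\<^sub>b\<^sub>\<in>\<^sub>C Q(u,k,b))\<close>, and the inner sum over \<open>C\<close> vanishes for \<open>k \<in> C\<close> and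
  is nonnegative otherwise. The weights \<open>p\<close> are needed because a transition family is not
  assumed to be nonnegative; for the ancestral process they are supplied by the law of the chain.\<close>

lemma transition_family_closed_class_mass_mono:
  assumes P: "transition_family lam \<rho> n P"
    and lam: "\<And>t. 0 \<le> t \<Longrightarrow> 0 \<le> lam t" and "0 \<le> \<rho>" "0 \<le> s" "s \<le> t"
    and C: "closed_class lam \<rho> n C"
    and nonneg: "\<And>k u. k \<in> state_space n \<Longrightarrow> s \<le> u \<Longrightarrow> 0 \<le> (\<Sum>a\<in>C. p a * P s u a k)"
  shows "(\<Sum>a\<in>C. p a) \<le> (\<Sum>a\<in>C. p a * (\<Sum>b\<in>C. P s t a b))"
proof -
  let ?S = "state_space n"
  have CS: "C \<subseteq> ?S" using C by (simp add: closed_class_def)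
  then have fC: "finite C" using finite_state_space finite_subset by blast
  define F where "F u = (\<Sum>a\<in>C. p a * (\<Sum>b\<in>C. P s u a b))" for u
  define F' where
    "F' u = (\<Sum>k\<in>?S. (\<Sum>a\<in>C. p a * P s u a k) * (\<Sum>b\<in>C. gen lam \<rho> n u k b))" for u
  have "(F has_real_derivative F' u) (at u within {s..})" if "s \<le> u" for u
  proof -
    have "(F has_real_derivative
            (\<Sum>a\<in>C. p a * (\<Sum>b\<in>C. \<Sum>k\<in>?S. P s u a k * gen lam \<rho> n u k b))) (at u within {s..})"
      unfolding F_def using P CS \<open>0 \<le> s\<close> that unfolding transition_family_def
      by (intro DERIV_sum DERIV_cmult) auto
    moreover have "(\<Sum>a\<in>C. p a * (\<Sum>b\<in>C. \<Sum>k\<in>?S. P s u a k * gen lam \<rho> n u k b)) = F' u"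
    proof -
      have "(\<Sum>a\<in>C. p a * (\<Sum>b\<in>C. \<Sum>k\<in>?S. P s u a k * gen lam \<rho> n u k b))
          = (\<Sum>a\<in>C. \<Sum>k\<in>?S. \<Sum>b\<in>C. p a * P s u a k * gen lam \<rho> n u k b)"
        by (simp add: sum_distrib_left mult.assoc) (rule sum.cong[OF refl], rule sum.swap)
      also have "\<dots> = F' u"
        unfolding F'_def by (subst sum.swap) (simp add: sum_product mult.assoc)
      finally show ?thesis .
    qed
    ultimately show ?thesis by simp
  qed
  moreover have "0 \<le> F' u" if "s \<le> u" for u
    unfolding F'_def
  proof (rule sum_nonneg, rule mult_nonneg_nonneg)
    fix k assume k: "k \<in> ?S"
    show "0 \<le> (\<Sum>a\<in>C. p a * P s u a k)" using nonneg k that .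
    show "0 \<le> (\<Sum>b\<in>C. gen lam \<rho> n u k b)"
      using gen_sum_closed_class_eq_0[OF C] gen_sum_nonneg_outside lam[of u] that \<open>0 \<le> s\<close> \<open>0 \<le> \<rho>\<close>
      by (cases "k \<in> C") auto
  qed
  ultimately have "F s \<le> F t"
    by (rule DERIV_within_nonneg_imp_nondecreasing) (use \<open>s \<le> t\<close> in auto)
  moreover have "F s = (\<Sum>a\<in>C. p a)"
  proof -
    have "P s s a b = (if a = b then 1 else 0)" if "a \<in> C" "b \<in> C" for a b
      using P CS \<open>0 \<le> s\<close> that unfolding transition_family_def by blast
    then show ?thesis unfolding F_def using fC by (simp cong: sum.cong)
  qed
  ultimately show ?thesis unfolding F_def by simp
qed

lemma transition_family_closed_class_escape_eq_0:
  assumes P: "transition_family lam \<rho> n P"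
    and lam: "\<And>t. 0 \<le> t \<Longrightarrow> 0 \<le> lam t" and "0 \<le> \<rho>" "0 \<le> s" "s \<le> t"
    and C: "closed_class lam \<rho> n C"
    and nonneg: "\<And>a k u. a \<in> C \<Longrightarrow> k \<in> state_space n \<Longrightarrow> s \<le> u \<Longrightarrow> 0 \<le> p a * P s u a k"
    and i: "i \<in> C" and j: "j \<in> state_space n - C"
  shows "p i * P s t i j = 0"
proof -
  let ?S = "state_space n"
  have CS: "C \<subseteq> ?S" using C by (simp add: closed_class_def)
  then have fC: "finite C" using finite_state_space finite_subset by blast
  have "(\<Sum>a\<in>C. p a) \<le> (\<Sum>a\<in>C. p a * (\<Sum>b\<in>C. P s t a b))"
  proof (rule transition_family_closed_class_mass_mono[OF P lam \<open>0 \<le> \<rho>\<close> \<open>0 \<le> s\<close> \<open>s \<le> t\<close> C])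
    fix k u assume "k \<in> ?S" "s \<le> u"
    then show "0 \<le> (\<Sum>a\<in>C. p a * P s u a k)" using nonneg by (simp add: sum_nonneg)
  qed
  moreover have "(\<Sum>a\<in>C. \<Sum>b\<in>?S - C. p a * P s t a b)
      = (\<Sum>a\<in>C. p a * ((\<Sum>b\<in>?S. P s t a b) - (\<Sum>b\<in>C. P s t a b)))"
    using CS finite_state_space by (intro sum.cong refl) (simp add: sum_distrib_left[symmetric] sum_diff)
  moreover have "(\<Sum>b\<in>?S. P s t a b) = 1" if "a \<in> C" for a
    using transition_family_row_sum[OF P \<open>0 \<le> s\<close> \<open>s \<le> t\<close>] CS that by blast
  ultimately have "(\<Sum>a\<in>C. \<Sum>b\<in>?S - C. p a * P s t a b) \<le> 0"
    by (simp add: right_diff_distrib sum_subtractf)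
  moreover have terms_nonneg: "\<And>a b. a \<in> C \<Longrightarrow> b \<in> ?S - C \<Longrightarrow> 0 \<le> p a * P s t a b"
    using nonneg \<open>s \<le> t\<close> by blast
  ultimately have "(\<Sum>a\<in>C. \<Sum>b\<in>?S - C. p a * P s t a b) = 0"
    by (meson antisym sum_nonneg)
  then have "\<forall>a\<in>C. (\<Sum>b\<in>?S - C. p a * P s t a b) = 0"
    using fC terms_nonneg by (subst (asm) sum_nonneg_eq_0_iff) (auto intro: sum_nonneg)
  then have "(\<Sum>b\<in>?S - C. p i * P s t i b) = 0" using i by blast
  then show ?thesis
    using sum_nonneg_eq_0_iff[of "?S - C" "\<lambda>b. p i * P s t i b"] finite_state_space
      terms_nonneg[OF i] j by blast
qed

section \<open>Paths of the ancestral process\<close>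

definition right_constant :: "(real \<Rightarrow> 'a) \<Rightarrow> bool" where
  "right_constant x \<longleftrightarrow> (\<forall>t\<ge>0. \<exists>e>0. \<forall>u. t \<le> u \<and> u < t + e \<longrightarrow> x u = x t)"

lemma ancestral_process_measurable:
  "ancestral_process M lam \<rho> n X \<Longrightarrow> 0 \<le> t \<Longrightarrow> X t \<in> M \<rightarrow>\<^sub>M count_space UNIV"
  unfolding ancestral_process_def by blast

lemma ancestral_process_pred:
  "ancestral_process M lam \<rho> n X \<Longrightarrow> 0 \<le> t \<Longrightarrow> Measurable.pred M (\<lambda>\<omega>. Q (X t \<omega>))"
  by (rule measurable_compose[OF ancestral_process_measurable measurable_count_space])

lemma ancestral_process_in_state_space:
  "ancestral_process M lam \<rho> n X \<Longrightarrow> \<omega> \<in> space M \<Longrightarrow> 0 \<le> t \<Longrightarrow> X t \<omega> \<in> state_space n"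
  unfolding ancestral_process_def by blast

lemma ancestral_process_right_constant:
  "ancestral_process M lam \<rho> n X \<Longrightarrow> \<omega> \<in> space M \<Longrightarrow> right_constant (\<lambda>t. X t \<omega>)"
  unfolding ancestral_process_def right_constant_def by blast

lemma ancestral_process_start:
  assumes X: "ancestral_process M lam \<rho> n X" and "1 \<le> n"
  shows "measure M {\<omega>\<in>space M. X 0 \<omega> = (n,0,0,0)} = 1"
proof -
  obtain P where "transition_family lam \<rho> n P" and
    law: "\<And>ts ss. length ts = length ss \<Longrightarrow> ts \<noteq> [] \<Longrightarrow> hd ts = 0 \<Longrightarrow> sorted ts \<Longrightarrow>
           set ss \<subseteq> state_space n \<Longrightarrow>
           measure M {\<omega>\<in>space M. \<forall>i<length ts. X (ts ! i) \<omega> = ss ! i}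
             = (if hd ss = (n,0,0,0) then 1 else 0) *
               (\<Prod>i<length ts - 1. P (ts ! i) (ts ! (i+1)) (ss ! i) (ss ! (i+1)))"
    using X unfolding ancestral_process_def by blast
  have "(n,0,0,0) \<in> state_space n" using \<open>1 \<le> n\<close> unfolding state_space_def by auto
  then show ?thesis using law[of "[0]" "[(n,0,0,0)]"] by simp
qed

lemma ancestral_process_law_three_times:
  assumes X: "ancestral_process M lam \<rho> n X" and "1 \<le> n"
  obtains P where "transition_family lam \<rho> n P"
    and "\<And>s t i j. 0 \<le> s \<Longrightarrow> s \<le> t \<Longrightarrow> i \<in> state_space n \<Longrightarrow> j \<in> state_space n \<Longrightarrow>
          measure M {\<omega>\<in>space M. X 0 \<omega> = (n,0,0,0) \<and> X s \<omega> = i \<and> X t \<omega> = j}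
            = P 0 s (n,0,0,0) i * P s t i j"
proof -
  obtain P where P: "transition_family lam \<rho> n P" and
    law: "\<And>ts ss. length ts = length ss \<Longrightarrow> ts \<noteq> [] \<Longrightarrow> hd ts = 0 \<Longrightarrow> sorted ts \<Longrightarrow>
           set ss \<subseteq> state_space n \<Longrightarrow>
           measure M {\<omega>\<in>space M. \<forall>i<length ts. X (ts ! i) \<omega> = ss ! i}
             = (if hd ss = (n,0,0,0) then 1 else 0) *
               (\<Prod>i<length ts - 1. P (ts ! i) (ts ! (i+1)) (ss ! i) (ss ! (i+1)))"
    using X unfolding ancestral_process_def by blast
  have start: "(n,0,0,0) \<in> state_space n" using \<open>1 \<le> n\<close> unfolding state_space_def by auto
  have "measure M {\<omega>\<in>space M. X 0 \<omega> = (n,0,0,0) \<and> X s \<omega> = i \<and> X t \<omega> = j}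
          = P 0 s (n,0,0,0) i * P s t i j"
    if "0 \<le> s" "s \<le> t" "i \<in> state_space n" "j \<in> state_space n" for s t i j
  proof -
    have "{\<omega>\<in>space M. X 0 \<omega> = (n,0,0,0) \<and> X s \<omega> = i \<and> X t \<omega> = j}
        = {\<omega>\<in>space M. \<forall>k<length [0,s,t]. X ([0,s,t] ! k) \<omega> = [(n,0,0,0),i,j] ! k}"
      by (auto simp: less_Suc_eq numeral_eq_Suc)
    then show ?thesis
      using law[of "[0,s,t]" "[(n,0,0,0),i,j]"] that start by (simp add: numeral_eq_Suc)
  qed
  then show ?thesis using P that by blast
qed

lemma ancestral_process_escape_null:
  assumes X: "ancestral_process M lam \<rho> n X" and "1 \<le> n"
    and lam: "\<forall>t\<ge>0. 0 < lam t" and "0 < \<rho>"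
    and C: "closed_class lam \<rho> n C" and "0 \<le> s" "s \<le> t"
    and i: "i \<in> C" and j: "j \<in> state_space n - C"
  shows "measure M {\<omega>\<in>space M. X 0 \<omega> = (n,0,0,0) \<and> X s \<omega> = i \<and> X t \<omega> = j} = 0"
proof -
  let ?S = "state_space n" and ?start = "(n,0,0,0) :: st"
  obtain P where P: "transition_family lam \<rho> n P"
    and law: "\<And>s t i j. 0 \<le> s \<Longrightarrow> s \<le> t \<Longrightarrow> i \<in> ?S \<Longrightarrow> j \<in> ?S \<Longrightarrow>
          measure M {\<omega>\<in>space M. X 0 \<omega> = ?start \<and> X s \<omega> = i \<and> X t \<omega> = j}
            = P 0 s ?start i * P s t i j"
    using ancestral_process_law_three_times[OF X \<open>1 \<le> n\<close>] by blast
  have CS: "C \<subseteq> ?S" using C by (simp add: closed_class_def)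
  have "P 0 s ?start i * P s t i j = 0"
  proof (rule transition_family_closed_class_escape_eq_0[OF P _ _ \<open>0 \<le> s\<close> \<open>s \<le> t\<close> C])
    fix a k u assume "a \<in> C" and k: "k \<in> ?S" and u: "s \<le> u"
    then have "a \<in> ?S" using CS by blast
    show "0 \<le> P 0 s ?start a * P s u a k"
      unfolding law[OF \<open>0 \<le> s\<close> u \<open>a \<in> ?S\<close> k, symmetric] by (rule measure_nonneg)
  next
    show "\<And>t. 0 \<le> t \<Longrightarrow> 0 \<le> lam t" using lam by (simp add: less_imp_le)
  qed (use \<open>0 < \<rho>\<close> i j in auto)
  moreover have "i \<in> ?S" using CS i by blast
  ultimately show ?thesis using law[OF \<open>0 \<le> s\<close> \<open>s \<le> t\<close> \<open>i \<in> ?S\<close>] j by simp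
qed

lemma ancestral_process_closed_class_AE:
  assumes X: "ancestral_process M lam \<rho> n X" and M: "prob_space M" and "1 \<le> n"
    and lam: "\<forall>t\<ge>0. 0 < lam t" and "0 < \<rho>"
    and C: "closed_class lam \<rho> n C" and "0 \<le> s" "s \<le> t"
  shows "AE \<omega> in M. X s \<omega> \<in> C \<longrightarrow> X t \<omega> \<in> C"
proof -
  let ?S = "state_space n" and ?start = "(n,0,0,0) :: st"
  define A where "A i j = {\<omega>\<in>space M. X 0 \<omega> = ?start \<and> X s \<omega> = i \<and> X t \<omega> = j}" for i j
  have X_pred: "Measurable.pred M (\<lambda>\<omega>. X r \<omega> = a)" if "0 \<le> r" for r a
    using ancestral_process_pred[OF X that] .
  have A_sets: "A i j \<in> sets M" for i j
    unfolding A_def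
    by (rule predE, intro pred_intros_logic(3) X_pred) (use \<open>0 \<le> s\<close> \<open>s \<le> t\<close> in auto)
  have "AE \<omega> in M. X 0 \<omega> = ?start"
    using prob_space.AE_prob_1[OF M ancestral_process_start[OF X \<open>1 \<le> n\<close>]]
    by (auto elim: eventually_mono)
  moreover have "AE \<omega> in M. \<forall>(i, j)\<in>C \<times> (?S - C). \<omega> \<notin> A i j"
  proof (rule AE_finite_allI)
    show "finite (C \<times> (?S - C))"
      using C finite_state_space finite_subset unfolding closed_class_def by blast
    fix p assume "p \<in> C \<times> (?S - C)"
    then obtain i j where ij: "p = (i, j)" "i \<in> C" "j \<in> ?S - C" by blast
    have "AE \<omega> in M. \<omega> \<in> space M - A i j"
      using prob_space.prob_compl[OF M A_sets]
        ancestral_process_escape_null[OF X \<open>1 \<le> n\<close> lam \<open>0 < \<rho>\<close> C \<open>0 \<le> s\<close> \<open>s \<le> t\<close> ij(2,3)]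
      by (intro prob_space.AE_prob_1[OF M]) (simp add: A_def)
    then show "AE \<omega> in M. case p of (i, j) \<Rightarrow> \<omega> \<notin> A i j"
      unfolding ij by (auto elim: eventually_mono)
  qed
  ultimately show ?thesis using AE_space
  proof eventually_elim
    case (elim \<omega>)
    show ?case
    proof
      assume "X s \<omega> \<in> C"
      moreover have "X t \<omega> \<in> ?S"
        using ancestral_process_in_state_space[OF X elim(3)] \<open>0 \<le> s\<close> \<open>s \<le> t\<close> by simp
      moreover have "\<omega> \<in> A (X s \<omega>) (X t \<omega>)" unfolding A_def using elim by simp
      ultimately show "X t \<omega> \<in> C" using elim(2) by blast
    qed
  qed
qed

lemma right_constant_invariant_if_rational:
  assumes x: "right_constant x"
    and rat: "\<And>q r. q \<in> \<rat> \<Longrightarrow> r \<in> \<rat> \<Longrightarrow> 0 \<le> q \<Longrightarrow> q \<le> r \<Longrightarrow> x q \<in> C \<Longrightarrow> x r \<in> C"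
    and "0 \<le> a" "a \<le> b" "x a \<in> C"
  shows "x b \<in> C"
proof (cases "a = b")
  case False
  obtain ea where ea: "0 < ea" "\<And>u. a \<le> u \<Longrightarrow> u < a + ea \<Longrightarrow> x u = x a"
    using x \<open>0 \<le> a\<close> unfolding right_constant_def by blast
  obtain eb where eb: "0 < eb" "\<And>u. b \<le> u \<Longrightarrow> u < b + eb \<Longrightarrow> x u = x b"
    using x \<open>0 \<le> a\<close> \<open>a \<le> b\<close> unfolding right_constant_def by (meson order_trans)
  obtain q where q: "q \<in> \<rat>" "a < q" "q < min (a + ea) b"
    using Rats_dense_in_real[of a "min (a + ea) b"] False \<open>a \<le> b\<close> ea(1) by auto
  obtain r where r: "r \<in> \<rat>" "b < r" "r < b + eb"
    using Rats_dense_in_real[of b "b + eb"] eb(1) by auto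
  have "x q \<in> C" using ea(2)[of q] q \<open>x a \<in> C\<close> by simp
  then have "x r \<in> C" using rat[OF q(1) r(1)] q r \<open>0 \<le> a\<close> by simp
  then show ?thesis using eb(2)[of r] r by simp
qed (use \<open>x a \<in> C\<close> in simp)

text \<open>Right-constancy of the paths reduces the uncountably many times to rational ones.\<close>

lemma ancestral_process_closed_class_AE_paths:
  assumes X: "ancestral_process M lam \<rho> n X" and M: "prob_space M" and "1 \<le> n"
    and lam: "\<forall>t\<ge>0. 0 < lam t" and "0 < \<rho>" and C: "closed_class lam \<rho> n C"
  shows "AE \<omega> in M. \<forall>a b. 0 \<le> a \<longrightarrow> a \<le> b \<longrightarrow> X a \<omega> \<in> C \<longrightarrow> X b \<omega> \<in> C"
proof -
  have "AE \<omega> in M. \<forall>q r :: rat. 0 \<le> real_of_rat q \<longrightarrow> real_of_rat q \<le> real_of_rat r \<longrightarrow>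
          X (real_of_rat q) \<omega> \<in> C \<longrightarrow> X (real_of_rat r) \<omega> \<in> C"
    unfolding AE_all_countable
  proof (intro allI)
    fix q r :: rat
    show "AE \<omega> in M. 0 \<le> real_of_rat q \<longrightarrow> real_of_rat q \<le> real_of_rat r \<longrightarrow>
          X (real_of_rat q) \<omega> \<in> C \<longrightarrow> X (real_of_rat r) \<omega> \<in> C"
      using ancestral_process_closed_class_AE[OF X M \<open>1 \<le> n\<close> lam \<open>0 < \<rho>\<close> C,
          of "real_of_rat q" "real_of_rat r"]
      by (cases "0 \<le> real_of_rat q \<and> real_of_rat q \<le> real_of_rat r") (auto elim: eventually_mono)
  qed
  then show ?thesis using AE_space
  proof eventually_elim
    case (elim \<omega>)
    show ?case
    proof (intro allI impI)
      fix a b :: real assume "0 \<le> a" "a \<le> b" "X a \<omega> \<in> C"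
      show "X b \<omega> \<in> C"
      proof (rule right_constant_invariant_if_rational[OF ancestral_process_right_constant[OF X elim(2)]
            _ \<open>0 \<le> a\<close> \<open>a \<le> b\<close> \<open>X a \<omega> \<in> C\<close>])
        fix q r :: real assume "q \<in> \<rat>" "r \<in> \<rat>" "0 \<le> q" "q \<le> r" "X q \<omega> \<in> C"
        then show "X r \<omega> \<in> C" using elim(1) by (auto elim!: Rats_cases)
      qed
    qed
  qed
qed

section \<open>The tree length functional\<close>

lemma dyadic_ceiling_approx:
  fixes u e :: real
  assumes "0 < e"
  shows "\<exists>N. \<forall>m\<ge>N. u \<le> real_of_int \<lceil>u * 2^m\<rceil> / 2^m \<and> real_of_int \<lceil>u * 2^m\<rceil> / 2^m < u + e"
proof -
  obtain N where N: "(1/2::real)^N < e" using real_arch_pow_inv[of e "1/2"] assms by auto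
  have "u \<le> real_of_int \<lceil>u * 2^m\<rceil> / 2^m \<and> real_of_int \<lceil>u * 2^m\<rceil> / 2^m < u + e"
    if "N \<le> m" for m :: nat
  proof -
    have "(1/2::real)^m \<le> (1/2)^N" using that by (intro power_decreasing) auto
    then have "1 / 2^m < e" using N by (simp add: power_one_over)
    moreover have "real_of_int \<lceil>u * 2^m\<rceil> < u * 2^m + 1" "u * 2^m \<le> real_of_int \<lceil>u * 2^m\<rceil>"
      by linarith+
    ultimately show ?thesis by (simp add: field_simps)
  qed
  then show ?thesis by blast
qed

text \<open>Approximate the time from the right by dyadic rationals; right-constancy makes the
  approximation eventually exact.\<close>

lemma right_constant_process_measurable_pair:
  fixes X :: "real \<Rightarrow> 'w \<Rightarrow> 'a" and g :: "'a \<Rightarrow> real"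
  assumes meas: "\<And>t. 0 \<le> t \<Longrightarrow> X t \<in> M \<rightarrow>\<^sub>M count_space UNIV"
    and paths: "\<And>\<omega>. \<omega> \<in> space M \<Longrightarrow> right_constant (\<lambda>t. X t \<omega>)"
  shows "(\<lambda>p. if 0 \<le> snd p then g (X (snd p) (fst p)) else 0) \<in> borel_measurable (M \<Otimes>\<^sub>M lborel)"
proof (rule borel_measurable_LIMSEQ_real)
  fix m :: nat
  define F where
    "F k p = (if 0 \<le> snd p then g (X (max 0 (real_of_int k / 2^m)) (fst p)) else 0)"
    for k :: int and p :: "'w \<times> real"
  have nonneg: "{p \<in> space (M \<Otimes>\<^sub>M lborel). 0 \<le> (snd p :: real)} \<in> sets (M \<Otimes>\<^sub>M lborel)"
  proof -
    have "{p \<in> space (M \<Otimes>\<^sub>M lborel). 0 \<le> (snd p :: real)} = space M \<times> {0..}"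
      by (auto simp: space_pair_measure)
    then show ?thesis by (simp add: pair_measureI)
  qed
  have "(\<lambda>p. F \<lceil>snd p * 2^m\<rceil> p) \<in> borel_measurable (M \<Otimes>\<^sub>M lborel)"
  proof (rule measurable_compose_countable)
    fix k :: int
    have "(\<lambda>p. g (X (max 0 (real_of_int k / 2^m)) (fst p))) \<in> borel_measurable (M \<Otimes>\<^sub>M lborel)"
      by (rule measurable_compose[OF measurable_compose[OF measurable_fst meas]
            borel_measurable_count_space]) simp
    then show "F k \<in> borel_measurable (M \<Otimes>\<^sub>M lborel)"
      unfolding F_def by (rule measurable_If[OF _ _ nonneg]) simp
  qed (rule measurable_compose[OF _ measurable_real_ceiling], measurable)
  then show "(\<lambda>p. if 0 \<le> snd p then g (X (max 0 (real_of_int \<lceil>(snd p :: real) * 2^m\<rceil> / 2^m)) (fst p)) else 0)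
      \<in> borel_measurable (M \<Otimes>\<^sub>M lborel)"
    unfolding F_def by simp
next
  fix p :: "'w \<times> real" assume "p \<in> space (M \<Otimes>\<^sub>M lborel)"
  then obtain \<omega> u where p: "p = (\<omega>, u)" "\<omega> \<in> space M" by (auto simp: space_pair_measure)
  show "(\<lambda>m. if 0 \<le> snd p then g (X (max 0 (real_of_int \<lceil>snd p * 2^m\<rceil> / 2^m)) (fst p)) else 0)
        \<longlonglongrightarrow> (if 0 \<le> snd p then g (X (snd p) (fst p)) else 0)"
  proof (cases "0 \<le> u")
    case True
    obtain e where e: "0 < e" "\<And>v. u \<le> v \<Longrightarrow> v < u + e \<Longrightarrow> X v \<omega> = X u \<omega>"
      using paths[OF p(2)] True unfolding right_constant_def by blast
    obtain N where "\<forall>m\<ge>N. u \<le> real_of_int \<lceil>u * 2^m\<rceil> / 2^m \<and> real_of_int \<lceil>u * 2^m\<rceil> / 2^m < u + e"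
      using dyadic_ceiling_approx[OF e(1)] by blast
    then have "\<forall>m\<ge>N. X (max 0 (real_of_int \<lceil>u * 2^m\<rceil> / 2^m)) \<omega> = X u \<omega>"
      using e(2) True by (metis max.absorb2 order.trans)
    then show ?thesis
      unfolding p using True by (intro tendsto_eventually eventually_sequentiallyI[of N]) auto
  qed (simp add: p)
qed

definition L_rate :: "(st \<Rightarrow> nat) \<Rightarrow> st \<Rightarrow> real" where
  "L_rate k s = (if 1 < k s then real (k s) else 0)"

lemma Lfun_eq_L_rate: "Lfun k X t \<omega> = (LINT u:{0..t}|lborel. L_rate k (X u \<omega>))"
  unfolding Lfun_def L_rate_def by simp

lemma L_rate_nonneg: "0 \<le> L_rate k s"
  unfolding L_rate_def by simp

lemma ancestral_process_measurable_pair: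
  fixes g :: "st \<Rightarrow> real"
  assumes X: "ancestral_process M lam \<rho> n X"
  shows "(\<lambda>p. if 0 \<le> snd p then g (X (snd p) (fst p)) else 0) \<in> borel_measurable (M \<Otimes>\<^sub>M lborel)"
  by (rule right_constant_process_measurable_pair[OF ancestral_process_measurable[OF X]
        ancestral_process_right_constant[OF X]])

lemma Lfun_measurable:
  assumes X: "ancestral_process M lam \<rho> n X"
  shows "(\<lambda>\<omega>. Lfun k X t \<omega>) \<in> borel_measurable M"
proof -
  have "(\<lambda>p. indicator {0..t} (snd p) * (if 0 \<le> snd p then L_rate k (X (snd p) (fst p)) else 0))
          \<in> borel_measurable (M \<Otimes>\<^sub>M lborel)"
    using ancestral_process_measurable_pair[OF X] by measurable
  then have "(\<lambda>(\<omega>, u). indicator {0..t} u *\<^sub>R L_rate k (X u \<omega>)) \<in> borel_measurable (M \<Otimes>\<^sub>M lborel)"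
    by (rule measurable_cong[THEN iffD1, rotated]) (auto split: split_indicator)
  then show ?thesis
    unfolding Lfun_eq_L_rate set_lebesgue_integral_def
    by (rule lborel.borel_measurable_lebesgue_integral)
qed

lemma right_constant_hitting_time_attained:
  fixes x :: "real \<Rightarrow> 'a"
  assumes x: "right_constant x" and "\<exists>t\<ge>0. Q (x t)"
  shows "\<exists>T\<ge>0. Inf {ereal t | t. 0 \<le> t \<and> Q (x t)} = ereal T \<and> Q (x T)
            \<and> (\<forall>t. 0 \<le> t \<and> t < T \<longrightarrow> \<not> Q (x t))"
proof -
  define E where "E = {t. 0 \<le> t \<and> Q (x t)}"
  define T where "T = Inf E"
  have "E \<noteq> {}" using assms(2) unfolding E_def by auto
  have bdd: "bdd_below E" unfolding E_def by (rule bdd_belowI[of _ 0]) auto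
  have lower: "T \<le> t" if "t \<in> E" for t unfolding T_def by (rule cInf_lower[OF that bdd])
  have "0 \<le> T" unfolding T_def by (rule cInf_greatest[OF \<open>E \<noteq> {}\<close>]) (auto simp: E_def)
  have "Q (x T)"
  proof (rule ccontr)
    assume "\<not> Q (x T)"
    obtain e where e: "0 < e" "\<And>u. T \<le> u \<Longrightarrow> u < T + e \<Longrightarrow> x u = x T"
      using x \<open>0 \<le> T\<close> unfolding right_constant_def by blast
    have "T + e \<le> t" if "t \<in> E" for t
      using e(2)[of t] lower[OF that] that \<open>\<not> Q (x T)\<close> unfolding E_def by force
    then have "T + e \<le> T" unfolding T_def by (intro cInf_greatest[OF \<open>E \<noteq> {}\<close>]) (auto simp: T_def)
    then show False using e by simp
  qed
  have "{ereal t | t. 0 \<le> t \<and> Q (x t)} = ereal ` E" unfolding E_def by auto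
  moreover have "Inf (ereal ` E) = ereal T"
  proof (rule antisym)
    show "Inf (ereal ` E) \<le> ereal T" using \<open>0 \<le> T\<close> \<open>Q (x T)\<close> by (intro Inf_lower) (auto simp: E_def)
    show "ereal T \<le> Inf (ereal ` E)" using lower by (intro Inf_greatest) auto
  qed
  moreover have "\<not> Q (x t)" if "0 \<le> t" "t < T" for t
    using lower[of t] that unfolding E_def by force
  ultimately show ?thesis using \<open>0 \<le> T\<close> \<open>Q (x T)\<close> by auto
qed

context
  fixes M :: "'w measure" and lam :: "real \<Rightarrow> real" and \<rho> :: real and n :: nat
    and X :: "real \<Rightarrow> 'w \<Rightarrow> st" and \<omega> :: 'w and k :: "st \<Rightarrow> nat"
  assumes X: "ancestral_process M lam \<rho> n X" and \<omega>: "\<omega> \<in> space M"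
begin

lemma set_integrable_L_rate:
  assumes "0 \<le> a"
  shows "set_integrable lborel {a..b} (\<lambda>u. L_rate k (X u \<omega>))"
proof -
  define B where "B = Max (L_rate k ` state_space n)"
  have "(\<lambda>u. (\<lambda>p. if 0 \<le> snd p then L_rate k (X (snd p) (fst p)) else 0) (\<omega>, u))
      \<in> borel_measurable lborel"
    by (rule measurable_Pair2[OF ancestral_process_measurable_pair[OF X] \<omega>])
  then have "(\<lambda>u. if 0 \<le> u then L_rate k (X u \<omega>) else 0) \<in> borel_measurable lborel"
    unfolding fst_conv snd_conv .
  moreover have "norm (if 0 \<le> u then L_rate k (X u \<omega>) else 0) \<le> B" if "u \<in> {a..b}" for u
    using that assms ancestral_process_in_state_space[OF X \<omega>, of u] finite_state_space
    by (auto simp: B_def L_rate_nonneg intro!: Max_ge)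
  ultimately have "integrable lborel (\<lambda>u. indicator {a..b} u *\<^sub>R (if 0 \<le> u then L_rate k (X u \<omega>) else 0))"
    by (intro integrableI_bounded_set_indicator[where B=B]) (auto simp: emeasure_lborel_Icc_eq)
  moreover have "(\<lambda>u. indicator {a..b} u *\<^sub>R (if 0 \<le> u then L_rate k (X u \<omega>) else 0))
      = (\<lambda>u. indicator {a..b} u *\<^sub>R L_rate k (X u \<omega>))"
    using assms by (auto simp: indicator_def)
  ultimately show ?thesis unfolding set_integrable_def by simp
qed

lemma Lfun_split:
  assumes "0 \<le> a" "a \<le> b"
  shows "Lfun k X b \<omega> = Lfun k X a \<omega> + (LINT u:{a<..b}|lborel. L_rate k (X u \<omega>))"
proof -
  have split: "{0..b} = {0..a} \<union> {a<..b}" using assms by auto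
  have "set_integrable lborel {a<..b} (\<lambda>u. L_rate k (X u \<omega>))"
    using set_integrable_L_rate[OF \<open>0 \<le> a\<close>, of b] by (rule set_integrable_subset) auto
  with set_integrable_L_rate[of 0 a] show ?thesis
    unfolding Lfun_eq_L_rate split by (intro set_integral_Un) auto
qed

lemma L_rate_integral_nonneg: "0 \<le> (LINT u:A|lborel. L_rate k (X u \<omega>))"
  unfolding set_lebesgue_integral_def
  by (rule Bochner_Integration.integral_nonneg) (simp add: L_rate_nonneg)

lemma Lfun_nonneg: "0 \<le> Lfun k X t \<omega>"
  unfolding Lfun_eq_L_rate by (rule L_rate_integral_nonneg)

lemma Lfun_mono: "0 \<le> a \<Longrightarrow> a \<le> b \<Longrightarrow> Lfun k X a \<omega> \<le> Lfun k X b \<omega>"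
  using Lfun_split L_rate_integral_nonneg by (metis le_add_same_cancel1)

lemma Lfun_eq_if_le_1:
  assumes "0 \<le> a" "a \<le> b" and le_1: "\<And>u. a < u \<Longrightarrow> u \<le> b \<Longrightarrow> k (X u \<omega>) \<le> 1"
  shows "Lfun k X b \<omega> = Lfun k X a \<omega>"
proof -
  have "L_rate k (X u \<omega>) = 0" if "u \<in> {a<..b}" for u
    using le_1[of u] that by (simp add: L_rate_def)
  then have "(LINT u:{a<..b}|lborel. L_rate k (X u \<omega>)) = (LINT u:{a<..b}|lborel. 0)"
    by (intro set_lebesgue_integral_cong) auto
  then show ?thesis using Lfun_split[OF assms(1,2)] by (simp add: set_lebesgue_integral_def)
qed

lemma Lfun_lower_bound:
  assumes "0 \<le> t" and gt_1: "\<And>u. 0 \<le> u \<Longrightarrow> u \<le> t \<Longrightarrow> 1 < k (X u \<omega>)"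
  shows "2 * t \<le> Lfun k X t \<omega>"
proof -
  have "2 \<le> L_rate k (X u \<omega>)" if "u \<in> {0..t}" for u
    using gt_1[of u] that by (simp add: L_rate_def)
  then have "(LINT u:{0..t}|lborel. (2::real)) \<le> (LINT u:{0..t}|lborel. L_rate k (X u \<omega>))"
    using set_integrable_L_rate[of 0 t]
    by (intro set_integral_mono) (auto simp: set_integrable_def emeasure_lborel_Icc_eq)
  moreover have "(LINT u:{0..t}|lborel. (2::real)) = 2 * t"
    using \<open>0 \<le> t\<close> by (simp add: set_integral_const emeasure_lborel_Icc_eq measure_lborel_Icc)
  ultimately show ?thesis unfolding Lfun_eq_L_rate by simp
qed

lemma hit_attained:
  assumes "\<exists>t\<ge>0. k (X t \<omega>) \<le> 1"
  obtains T where "0 \<le> T" "k (X T \<omega>) \<le> 1" "\<And>t. 0 \<le> t \<Longrightarrow> t < T \<Longrightarrow> 1 < k (X t \<omega>)"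
    "Ltot k X \<omega> = ereal (Lfun k X T \<omega>)"
proof -
  obtain T where "0 \<le> T" "hit k X \<omega> = ereal T" "k (X T \<omega>) \<le> 1"
      "\<And>t. 0 \<le> t \<Longrightarrow> t < T \<Longrightarrow> 1 < k (X t \<omega>)"
    using right_constant_hitting_time_attained[OF ancestral_process_right_constant[OF X \<omega>], of "\<lambda>s. k s \<le> 1"]
      assms unfolding hit_def by force
  then show ?thesis using that by (simp add: Ltot_def)
qed

text \<open>Before the hitting time \<open>T\<close> the integrand is at least \<open>2\<close>, so \<open>\<L> \<le> z\<close> forces \<open>T \<le> z/2\<close>;
  this also excludes \<open>T = \<infinity>\<close>.\<close>

lemma Ltot_le_imp_hit:
  assumes "Ltot k X \<omega> \<le> ereal z"
  obtains T where "0 \<le> T" "k (X T \<omega>) \<le> 1" "Lfun k X T \<omega> \<le> z" "2 * T \<le> z"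
proof (cases "\<exists>t\<ge>0. k (X t \<omega>) \<le> 1")
  case False
  then have never: "{ereal t | t. 0 \<le> t \<and> k (X t \<omega>) \<le> 1} = {}" by auto
  have "hit k X \<omega> = \<infinity>" unfolding hit_def never by (simp add: top_ereal_def)
  then have Ltot: "Ltot k X \<omega> = (SUP t\<in>{0..}. ereal (Lfun k X t \<omega>))" by (simp add: Ltot_def)
  define t where "t = \<bar>z\<bar> / 2 + 1"
  have "0 \<le> t" by (simp add: t_def)
  then have "2 * t \<le> Lfun k X t \<omega>" using False by (intro Lfun_lower_bound) auto
  then have "ereal (2 * t) \<le> ereal (Lfun k X t \<omega>)" by simp
  also have "\<dots> \<le> Ltot k X \<omega>" unfolding Ltot using \<open>0 \<le> t\<close> by (intro SUP_upper) auto
  also have "\<dots> \<le> ereal z" by (rule assms)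
  finally have "2 * t \<le> z" by simp
  then show ?thesis by (simp add: t_def)
next
  case True
  then obtain T where T: "0 \<le> T" "k (X T \<omega>) \<le> 1" "\<And>t. 0 \<le> t \<Longrightarrow> t < T \<Longrightarrow> 1 < k (X t \<omega>)"
      "Ltot k X \<omega> = ereal (Lfun k X T \<omega>)"
    by (rule hit_attained) blast
  have LT: "Lfun k X T \<omega> \<le> z" using assms T(4) by simp
  have "2 * T \<le> z"
  proof (rule ccontr)
    assume "\<not> 2 * T \<le> z"
    define t where "t = (T + z / 2) / 2"
    have "0 \<le> z" using LT Lfun_nonneg[of T] by simp
    then have t: "0 \<le> t" "t < T" "z < 2 * t" using \<open>\<not> 2 * T \<le> z\<close> T(1) by (auto simp: t_def)
    then have "2 * t \<le> Lfun k X t \<omega>" using T(3) by (intro Lfun_lower_bound) auto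
    also have "\<dots> \<le> Lfun k X T \<omega>" using t by (intro Lfun_mono) auto
    finally show False using LT t by simp
  qed
  then show ?thesis using that T LT by blast
qed

lemma Ltot_le_Lfun:
  assumes "0 \<le> t" "k (X t \<omega>) \<le> 1"
  shows "Ltot k X \<omega> \<le> ereal (Lfun k X t \<omega>)"
proof -
  obtain T where T: "0 \<le> T" "\<And>t. 0 \<le> t \<Longrightarrow> t < T \<Longrightarrow> 1 < k (X t \<omega>)"
      "Ltot k X \<omega> = ereal (Lfun k X T \<omega>)"
    using hit_attained assms by blast
  have "T \<le> t" using T(2)[of t] assms by force
  then show ?thesis using T(1,3) by (simp add: Lfun_mono)
qed

text \<open>A countable description of \<open>\<L> \<le> z\<close>, which makes the event measurable.\<close>

lemma Ltot_le_iff_rational: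
  "Ltot k X \<omega> \<le> ereal z \<longleftrightarrow>
    (\<forall>m::nat. \<exists>q::rat. 0 \<le> real_of_rat q \<and> k (X (real_of_rat q) \<omega>) \<le> 1
        \<and> Lfun k X (real_of_rat q) \<omega> \<le> z + 1 / real (Suc m))"
  (is "_ \<longleftrightarrow> (\<forall>m. \<exists>q. ?good m q)")
proof
  assume "Ltot k X \<omega> \<le> ereal z"
  then obtain T where T: "0 \<le> T" "k (X T \<omega>) \<le> 1" "Lfun k X T \<omega> \<le> z"
    by (rule Ltot_le_imp_hit)
  obtain e where e: "0 < e" "\<And>u. T \<le> u \<Longrightarrow> u < T + e \<Longrightarrow> X u \<omega> = X T \<omega>"
    using ancestral_process_right_constant[OF X \<omega>] T(1) unfolding right_constant_def by blast
  obtain r where r: "r \<in> \<rat>" "T < r" "r < T + e"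
    using Rats_dense_in_real[of T "T + e"] e(1) by auto
  then obtain q where q: "r = real_of_rat q" by (auto elim: Rats_cases)
  have "k (X u \<omega>) \<le> 1" if "T < u" "u \<le> r" for u
    using e(2)[of u] that r T(2) by simp
  then have "Lfun k X r \<omega> = Lfun k X T \<omega>"
    using T(1) r(2) by (intro Lfun_eq_if_le_1) auto
  moreover have "X r \<omega> = X T \<omega>" using e(2)[of r] r by simp
  moreover have "0 \<le> real_of_rat q" using T(1) r(2) q by linarith
  ultimately have "?good m q" for m
    using T r q by (auto simp: add_increasing2)
  then show "\<forall>m. \<exists>q. ?good m q" by blast
next
  assume good: "\<forall>m. \<exists>q. ?good m q"
  have bound: "Ltot k X \<omega> \<le> ereal (z + 1 / real (Suc m))" for m
  proof -
    obtain q where q: "?good m q" using good by blast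
    then have "Ltot k X \<omega> \<le> ereal (Lfun k X (real_of_rat q) \<omega>)" by (intro Ltot_le_Lfun) auto
    also have "\<dots> \<le> ereal (z + 1 / real (Suc m))" using q by simp
    finally show ?thesis .
  qed
  obtain q where "?good 0 q" using good by blast
  then obtain T where T: "Ltot k X \<omega> = ereal (Lfun k X T \<omega>)"
    using hit_attained by blast
  have "Lfun k X T \<omega> \<le> z"
  proof (rule field_le_epsilon)
    fix e :: real assume "0 < e"
    then obtain m where "inverse (real (Suc m)) < e" using reals_Archimedean by blast
    then show "Lfun k X T \<omega> \<le> z + e" using bound[of m] T by (simp add: inverse_eq_divide)
  qed
  then show "Ltot k X \<omega> \<le> ereal z" using T by simp
qed

lemma Ltot_le_iff_absorbed:
  assumes absorbing: "\<And>a b. 0 \<le> a \<Longrightarrow> a \<le> b \<Longrightarrow> k (X a \<omega>) \<le> 1 \<Longrightarrow> k (X b \<omega>) \<le> 1"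
    and "0 \<le> t" "z \<le> 2 * t"
  shows "Ltot k X \<omega> \<le> ereal z \<longleftrightarrow> k (X t \<omega>) \<le> 1 \<and> Lfun k X t \<omega> \<le> z"
proof
  assume "Ltot k X \<omega> \<le> ereal z"
  then obtain T where T: "0 \<le> T" "k (X T \<omega>) \<le> 1" "Lfun k X T \<omega> \<le> z" "2 * T \<le> z"
    by (rule Ltot_le_imp_hit)
  then have "T \<le> t" using \<open>z \<le> 2 * t\<close> by simp
  have "k (X u \<omega>) \<le> 1" if "T \<le> u" for u
    using absorbing[OF T(1) that T(2)] .
  then have "k (X t \<omega>) \<le> 1" "Lfun k X t \<omega> = Lfun k X T \<omega>"
    using T(1) \<open>T \<le> t\<close> by (auto intro!: Lfun_eq_if_le_1)
  then show "k (X t \<omega>) \<le> 1 \<and> Lfun k X t \<omega> \<le> z" using T by simp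
next
  assume "k (X t \<omega>) \<le> 1 \<and> Lfun k X t \<omega> \<le> z"
  then show "Ltot k X \<omega> \<le> ereal z"
    using Ltot_le_Lfun[OF \<open>0 \<le> t\<close>] by (meson ereal_less_eq(3) order_trans)
qed

end

lemma pred_Lfun_le:
  "ancestral_process M lam \<rho> n X \<Longrightarrow> Measurable.pred M (\<lambda>\<omega>. Lfun k X t \<omega> \<le> z)"
  using Lfun_measurable borel_measurable_iff_le unfolding pred_def by blast

lemma pred_Ltot_le:
  assumes X: "ancestral_process M lam \<rho> n X"
  shows "Measurable.pred M (\<lambda>\<omega>. Ltot k X \<omega> \<le> ereal z)"
proof -
  have "Measurable.pred M (\<lambda>\<omega>. \<forall>m::nat. \<exists>q::rat. 0 \<le> real_of_rat q \<and> k (X (real_of_rat q) \<omega>) \<le> 1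
        \<and> Lfun k X (real_of_rat q) \<omega> \<le> z + 1 / real (Suc m))"
  proof (intro pred_intros_countable)
    fix m :: nat and q :: rat
    show "Measurable.pred M (\<lambda>\<omega>. 0 \<le> real_of_rat q \<and> k (X (real_of_rat q) \<omega>) \<le> 1
        \<and> Lfun k X (real_of_rat q) \<omega> \<le> z + 1 / real (Suc m))"
    proof (cases "0 \<le> real_of_rat q")
      case True
      then show ?thesis
        using pred_intros_logic(3)[OF ancestral_process_pred[OF X True] pred_Lfun_le[OF X]] by simp
    qed simp
  qed
  then show ?thesis
    by (rule measurable_cong[THEN iffD1, rotated]) (simp add: Ltot_le_iff_rational[OF X])
qed

section \<open>The joint distribution of the total tree lengths\<close>

lemma offdiag_rate_Delta: "s \<in> Delta \<Longrightarrow> offdiag_rate lam \<rho> t s s' = 0"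
  unfolding offdiag_rate_def by simp

lemma offdiag_rate_1011: "offdiag_rate lam \<rho> t (1,0,1,1) s' = (if s' = (1,0,0,1) then lam t else 0)"
  unfolding offdiag_rate_def coal_rate_def rec_rate_def Delta_def by auto

lemma offdiag_rate_1101: "offdiag_rate lam \<rho> t (1,1,0,1) s' = (if s' = (1,0,0,1) then lam t else 0)"
  unfolding offdiag_rate_def coal_rate_def rec_rate_def Delta_def by auto

lemma closed_class_kA_le_1: "closed_class lam \<rho> n {s \<in> state_space n. kA s \<le> 1}"
proof -
  have "offdiag_rate lam \<rho> t s s' = 0"
    if "s \<in> state_space n" "kA s \<le> 1" "\<not> kA s' \<le> 1" for t s s'
  proof -
    have "s \<in> Delta \<or> s = (1,0,1,1)"
      using that(1,2) by (auto simp: state_space_def kA_def Delta_def)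
    moreover have "s' \<noteq> (1,0,0,1)" using that(3) by (auto simp: kA_def)
    ultimately show ?thesis using offdiag_rate_1011[of lam \<rho> t s'] by (auto simp: offdiag_rate_Delta)
  qed
  then show ?thesis unfolding closed_class_def by blast
qed

lemma closed_class_kB_le_1: "closed_class lam \<rho> n {s \<in> state_space n. kB s \<le> 1}"
proof -
  have "offdiag_rate lam \<rho> t s s' = 0"
    if "s \<in> state_space n" "kB s \<le> 1" "\<not> kB s' \<le> 1" for t s s'
  proof -
    have "s \<in> Delta \<or> s = (1,1,0,1)"
      using that(1,2) by (auto simp: state_space_def kB_def Delta_def)
    moreover have "s' \<noteq> (1,0,0,1)" using that(3) by (auto simp: kB_def)
    ultimately show ?thesis using offdiag_rate_1101[of lam \<rho> t s'] by (auto simp: offdiag_rate_Delta)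
  qed
  then show ?thesis unfolding closed_class_def by blast
qed

lemma Delta_iff_kA_kB_le_1:
  assumes "s \<in> state_space n"
  shows "s \<in> Delta \<longleftrightarrow> kA s \<le> 1 \<and> kB s \<le> 1"
proof
  show "s \<in> Delta \<Longrightarrow> kA s \<le> 1 \<and> kB s \<le> 1" by (auto simp: Delta_def kA_def kB_def)
  show "kA s \<le> 1 \<and> kB s \<le> 1 \<Longrightarrow> s \<in> Delta"
    using assms unfolding state_space_def kA_def kB_def Delta_def by auto
qed

lemma ancestral_process_Ltot_le_iff_AE:
  assumes X: "ancestral_process M lam \<rho> n X" and M: "prob_space M" and "1 \<le> n"
    and lam: "\<forall>t\<ge>0. 0 < lam t" and "0 < \<rho>"
    and C: "closed_class lam \<rho> n {s \<in> state_space n. k s \<le> 1}"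
    and "0 \<le> t" "z \<le> 2 * t"
  shows "AE \<omega> in M. Ltot k X \<omega> \<le> ereal z \<longleftrightarrow> k (X t \<omega>) \<le> 1 \<and> Lfun k X t \<omega> \<le> z"
  using ancestral_process_closed_class_AE_paths[OF X M \<open>1 \<le> n\<close> lam \<open>0 < \<rho>\<close> C] AE_space
proof eventually_elim
  case (elim \<omega>)
  show ?case
  proof (rule Ltot_le_iff_absorbed[OF X elim(2) _ \<open>0 \<le> t\<close> \<open>z \<le> 2 * t\<close>])
    fix a b assume "0 \<le> a" "a \<le> b" "k (X a \<omega>) \<le> 1"
    then have "X a \<omega> \<in> {s \<in> state_space n. k s \<le> 1}"
      using ancestral_process_in_state_space[OF X elim(2)] by simp
    then show "k (X b \<omega>) \<le> 1" using elim(1) \<open>0 \<le> a\<close> \<open>a \<le> b\<close> by blast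
  qed
qed

lemma measure_Ltot_le_eq_measure_Delta:
  assumes M: "prob_space M" and X: "ancestral_process M lam \<rho> n X" and "1 \<le> n"
    and lam: "\<forall>t\<ge>0. 0 < lam t" and "0 < \<rho>"
    and "0 \<le> t" "x \<le> 2 * t" "y \<le> 2 * t"
  shows "measure M {\<omega>\<in>space M. Ltot kA X \<omega> \<le> ereal x \<and> Ltot kB X \<omega> \<le> ereal y}
       = measure M {\<omega>\<in>space M. X t \<omega> \<in> Delta \<and> Lfun kA X t \<omega> \<le> x \<and> Lfun kB X t \<omega> \<le> y}"
proof (rule measure_eq_AE)
  show "AE \<omega> in M. \<omega> \<in> {\<omega>\<in>space M. Ltot kA X \<omega> \<le> ereal x \<and> Ltot kB X \<omega> \<le> ereal y}
      \<longleftrightarrow> \<omega> \<in> {\<omega>\<in>space M. X t \<omega> \<in> Delta \<and> Lfun kA X t \<omega> \<le> x \<and> Lfun kB X t \<omega> \<le> y}"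
    using ancestral_process_Ltot_le_iff_AE[OF X M \<open>1 \<le> n\<close> lam \<open>0 < \<rho>\<close> closed_class_kA_le_1
        \<open>0 \<le> t\<close> \<open>x \<le> 2 * t\<close>]
      ancestral_process_Ltot_le_iff_AE[OF X M \<open>1 \<le> n\<close> lam \<open>0 < \<rho>\<close> closed_class_kB_le_1
        \<open>0 \<le> t\<close> \<open>y \<le> 2 * t\<close>]
      AE_space
  proof eventually_elim
    case (elim \<omega>)
    then show ?case
      using Delta_iff_kA_kB_le_1[OF ancestral_process_in_state_space[OF X elim(3) \<open>0 \<le> t\<close>]] by auto
  qed
  show "{\<omega>\<in>space M. Ltot kA X \<omega> \<le> ereal x \<and> Ltot kB X \<omega> \<le> ereal y} \<in> sets M"
    by (rule predE, rule pred_intros_logic(3)) (intro pred_Ltot_le[OF X])+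
  show "{\<omega>\<in>space M. X t \<omega> \<in> Delta \<and> Lfun kA X t \<omega> \<le> x \<and> Lfun kB X t \<omega> \<le> y} \<in> sets M"
    by (rule predE, intro pred_intros_logic(3) ancestral_process_pred[OF X \<open>0 \<le> t\<close>] pred_Lfun_le[OF X])
qed

lemma measure_Delta_eq_Fs:
  assumes M: "prob_space M" and X: "ancestral_process M lam \<rho> n X" and "0 \<le> t"
  shows "measure M {\<omega>\<in>space M. X t \<omega> \<in> Delta \<and> Lfun kA X t \<omega> \<le> x \<and> Lfun kB X t \<omega> \<le> y}
       = Fs M X (1,0,0,0) t x y + Fs M X (1,0,0,1) t x y"
proof -
  let ?E = "\<lambda>s. {\<omega>\<in>space M. X t \<omega> = s \<and> Lfun kA X t \<omega> \<le> x \<and> Lfun kB X t \<omega> \<le> y}"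
  have sets: "?E s \<in> sets M" for s
    by (rule predE, intro pred_intros_logic(3) ancestral_process_pred[OF X \<open>0 \<le> t\<close>] pred_Lfun_le[OF X])
  have "{\<omega>\<in>space M. X t \<omega> \<in> Delta \<and> Lfun kA X t \<omega> \<le> x \<and> Lfun kB X t \<omega> \<le> y}
      = ?E (1,0,0,0) \<union> ?E (1,0,0,1)"
    by (auto simp: Delta_def)
  moreover have "?E (1,0,0,0) \<inter> ?E (1,0,0,1) = {}" by auto
  ultimately show ?thesis
    unfolding Fs_def using finite_measure.finite_measure_Union[OF prob_space.finite_measure[OF M] sets sets]
    by simp
qed

theorem lemma2:
  fixes M :: "'w measure" and X :: "real \<Rightarrow> 'w \<Rightarrow> st" and lam :: "real \<Rightarrow> real"
    and n :: nat and \<rho> x y tbar :: real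
  assumes "prob_space M"
    and "continuous_on {0..} lam" and "\<forall>t\<ge>0. lam t > 0"
    and "n \<ge> 2" and "\<rho> > 0"
    and "ancestral_process M lam \<rho> n X"
    and "x \<ge> 0" and "y \<ge> 0" and "tbar \<ge> max x y / 2"
  shows "measure M {\<omega>\<in>space M. Ltot kA X \<omega> \<le> ereal x \<and> Ltot kB X \<omega> \<le> ereal y}
           = measure M {\<omega>\<in>space M. X tbar \<omega> \<in> Delta \<and> Lfun kA X tbar \<omega> \<le> x \<and> Lfun kB X tbar \<omega> \<le> y}
       \<and> measure M {\<omega>\<in>space M. X tbar \<omega> \<in> Delta \<and> Lfun kA X tbar \<omega> \<le> x \<and> Lfun kB X tbar \<omega> \<le> y}
           = Fs M X (1,0,0,0) tbar x y + Fs M X (1,0,0,1) tbar x y"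
proof
  have "0 \<le> tbar" "x \<le> 2 * tbar" "y \<le> 2 * tbar" "1 \<le> n" using assms(4,7-9) by auto
  then show "measure M {\<omega>\<in>space M. Ltot kA X \<omega> \<le> ereal x \<and> Ltot kB X \<omega> \<le> ereal y}
           = measure M {\<omega>\<in>space M. X tbar \<omega> \<in> Delta \<and> Lfun kA X tbar \<omega> \<le> x \<and> Lfun kB X tbar \<omega> \<le> y}"
    using measure_Ltot_le_eq_measure_Delta[OF assms(1,6) _ assms(3,5)] by blast
  show "measure M {\<omega>\<in>space M. X tbar \<omega> \<in> Delta \<and> Lfun kA X tbar \<omega> \<le> x \<and> Lfun kB X tbar \<omega> \<le> y}
           = Fs M X (1,0,0,0) tbar x y + Fs M X (1,0,0,1) tbar x y"
    using measure_Delta_eq_Fs[OF assms(1,6)] assms(7,9) by simp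
qed

end
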